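(* Let $G=(V,E)$ be a connected graph on at least three vertices and let $E'$ be a minimum-size $(3,1)$-completion set of $G$. Then for every edge $e'\in E'$ there exists a triangle in $G\cup E'$ containing $e'$ such that at least one edge of this triangle is an edge of $G$ that is unsaturated in $G$.
   Context: A connected graph has a $(3,1)$-cover if each of its edges lies in at least one triangle. A set $E'\subseteq(V\times V)\setminus E$ of non-edges of $G$ is a $(3,1)$-completion set if $G\cup E'$ has a $(3,1)$-cover. An edge $e\in E$ is unsaturated in $G$ if it is contained in no triangle of $G$. *)

theory Defs
  imports Main
begin

definition simple_graph :: "'a set \<Rightarrow> 'a set set \<Rightarrow> bool" where
  "simple_graph V E \<longleftrightarrow> finite V \<and>
     (\<forall>e\<in>E. \<exists>u v. e = {u, v} \<and> u \<noteq> v \<and> u \<in> V \<and> v \<in> V)"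

definition connected_graph :: "'a set \<Rightarrow> 'a set set \<Rightarrow> bool" where
  "connected_graph V E \<longleftrightarrow> simple_graph V E \<and>
     (\<forall>u\<in>V. \<forall>v\<in>V. (\<lambda>x y. {x, y} \<in> E)\<^sup>*\<^sup>* u v)"

definition in_triangle :: "'a set set \<Rightarrow> 'a set \<Rightarrow> bool" where
  "in_triangle E e \<longleftrightarrow> e \<in> E \<and> (\<exists>a b c. e = {a, b} \<and> {a, c} \<in> E \<and> {b, c} \<in> E)"

definition has_31_cover :: "'a set set \<Rightarrow> bool" where
  "has_31_cover E \<longleftrightarrow> (\<forall>e\<in>E. in_triangle E e)"

definition non_edges :: "'a set \<Rightarrow> 'a set set \<Rightarrow> 'a set set" where
  "non_edges V E = {{u, v} | u v. u \<in> V \<and> v \<in> V \<and> u \<noteq> v} - E"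

definition completion_set_31 :: "'a set \<Rightarrow> 'a set set \<Rightarrow> 'a set set \<Rightarrow> bool" where
  "completion_set_31 V E E' \<longleftrightarrow> E' \<subseteq> non_edges V E \<and> has_31_cover (E \<union> E')"

definition min_completion_set_31 :: "'a set \<Rightarrow> 'a set set \<Rightarrow> 'a set set \<Rightarrow> bool" where
  "min_completion_set_31 V E E' \<longleftrightarrow> completion_set_31 V E E' \<and>
     (\<forall>F. completion_set_31 V E F \<longrightarrow> card E' \<le> card F)"

definition unsaturated :: "'a set set \<Rightarrow> 'a set \<Rightarrow> bool" where
  "unsaturated E e \<longleftrightarrow> e \<in> E \<and> \<not> in_triangle E e"

end

theory Submission
  imports Defs
begin

text \<open>Call an edge of \<open>E'\<close> supported if it lies in a triangle of \<open>E \<union> E'\<close> having an edge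
  unsaturated in \<open>E\<close>. Keeping only the supported edges of \<open>E'\<close> still yields a (3,1)-cover:
  a saturated edge of \<open>E\<close> keeps its triangle inside \<open>E\<close>, and any triangle of \<open>E \<union> E'\<close> with an
  unsaturated edge consists of edges of \<open>E\<close> and supported edges only. By minimality of \<open>E'\<close>
  no edge of \<open>E'\<close> is unsupported.\<close>

definition triangle_with_unsaturated_edge ::
    "'a set set \<Rightarrow> 'a set set \<Rightarrow> 'a \<Rightarrow> 'a \<Rightarrow> 'a \<Rightarrow> bool" where
  "triangle_with_unsaturated_edge E F a b c \<longleftrightarrow> {a, b} \<in> F \<and> {a, c} \<in> F \<and> {b, c} \<in> F \<and>
     (unsaturated E {a, b} \<or> unsaturated E {a, c} \<or> unsaturated E {b, c})"

definition supported_edges :: "'a set set \<Rightarrow> 'a set set \<Rightarrow> 'a set set" where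
  "supported_edges E E' =
     {e \<in> E'. \<exists>a b c. e = {a, b} \<and> triangle_with_unsaturated_edge E (E \<union> E') a b c}"

lemma in_triangle_mono: "in_triangle E e \<Longrightarrow> E \<subseteq> F \<Longrightarrow> in_triangle F e"
  unfolding in_triangle_def by blast

lemma triangle_with_unsaturated_edge_rotate:
  "triangle_with_unsaturated_edge E F a b c \<Longrightarrow> triangle_with_unsaturated_edge E F b c a"
  unfolding triangle_with_unsaturated_edge_def by (simp add: insert_commute) blast

lemma triangle_with_unsaturated_edge_swap:
  "triangle_with_unsaturated_edge E F a b c \<Longrightarrow> triangle_with_unsaturated_edge E F a c b"
  unfolding triangle_with_unsaturated_edge_def by (simp add: insert_commute) blast

lemma triangle_with_unsaturated_edge_edge_supported:
  assumes "triangle_with_unsaturated_edge E (E \<union> E') a b c"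
  shows "{a, b} \<in> E \<union> supported_edges E E'"
  using assms unfolding supported_edges_def triangle_with_unsaturated_edge_def by blast

lemma has_31_cover_supported_edges:
  assumes cover: "has_31_cover (E \<union> E')"
  shows "has_31_cover (E \<union> supported_edges E E')"
  unfolding has_31_cover_def
proof
  fix e assume e: "e \<in> E \<union> supported_edges E E'"
  show "in_triangle (E \<union> supported_edges E E') e"
  proof (cases "in_triangle E e")
    case True
    then show ?thesis by (rule in_triangle_mono) simp
  next
    case saturated: False
    have "\<exists>a b c. e = {a, b} \<and> triangle_with_unsaturated_edge E (E \<union> E') a b c"
    proof (cases "e \<in> E")
      case True
      then have "in_triangle (E \<union> E') e" using cover unfolding has_31_cover_def by blast
      moreover have "unsaturated E e" using True saturated unfolding unsaturated_def by simp
      ultimately show ?thesis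
        unfolding in_triangle_def triangle_with_unsaturated_edge_def by blast
    next
      case False
      then show ?thesis using e unfolding supported_edges_def by blast
    qed
    then obtain a b c where "e = {a, b}" and tri: "triangle_with_unsaturated_edge E (E \<union> E') a b c"
      by blast
    have "{a, c} \<in> E \<union> supported_edges E E'"
      by (rule triangle_with_unsaturated_edge_edge_supported
          [OF triangle_with_unsaturated_edge_swap[OF tri]])
    moreover have "{b, c} \<in> E \<union> supported_edges E E'"
      by (rule triangle_with_unsaturated_edge_edge_supported
          [OF triangle_with_unsaturated_edge_rotate[OF tri]])
    ultimately show ?thesis using e \<open>e = {a, b}\<close> unfolding in_triangle_def by blast
  qed
qed

lemma finite_non_edges: "finite V \<Longrightarrow> finite (non_edges V E)"
  by (rule finite_subset[of _ "Pow V"]) (auto simp: non_edges_def)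

theorem lemma11:
  fixes V :: "'a set" and E E' :: "'a set set"
  assumes "connected_graph V E"
    and "card V \<ge> 3"
    and "min_completion_set_31 V E E'"
  shows "\<forall>e'\<in>E'. \<exists>a b c. e' = {a, b} \<and> {a, c} \<in> E \<union> E' \<and> {b, c} \<in> E \<union> E' \<and>
           (unsaturated E {a, b} \<or> unsaturated E {a, c} \<or> unsaturated E {b, c})"
proof -
  let ?S = "supported_edges E E'"
  have completion: "completion_set_31 V E E'"
    and minimal: "\<And>F. completion_set_31 V E F \<Longrightarrow> card E' \<le> card F"
    using assms(3) unfolding min_completion_set_31_def by auto
  have "finite V" using assms(1) unfolding connected_graph_def simple_graph_def by blast
  then have "finite E'"
    using completion unfolding completion_set_31_def by (meson finite_non_edges finite_subset)
  have "?S \<subseteq> E'" unfolding supported_edges_def by blast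
  then have "completion_set_31 V E ?S"
    using completion has_31_cover_supported_edges unfolding completion_set_31_def
    by (meson subset_trans)
  then have "card E' \<le> card ?S" by (rule minimal)
  with \<open>?S \<subseteq> E'\<close> \<open>finite E'\<close> have "?S = E'" by (meson card_seteq)
  show ?thesis
  proof
    fix e' assume "e' \<in> E'"
    with \<open>?S = E'\<close> have "e' \<in> ?S" by simp
    then obtain a b c
      where "e' = {a, b}" "triangle_with_unsaturated_edge E (E \<union> E') a b c"
      unfolding supported_edges_def by blast
    then show "\<exists>a b c. e' = {a, b} \<and> {a, c} \<in> E \<union> E' \<and> {b, c} \<in> E \<union> E' \<and>
        (unsaturated E {a, b} \<or> unsaturated E {a, c} \<or> unsaturated E {b, c})"
      unfolding triangle_with_unsaturated_edge_def by blast
  qed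
qed

end
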